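(* For a lightlike hypersurface $V^3$ of a $4$-dimensional manifold $(M,c)$ with conformal structure of Lorentzian signature $(3,1)$, without umbilical points, the affinor $H^a_b$ is proportional to the Burali-Forti affinor: $H^a_b=\frac{\nu}{2\mu}h^a_b$. Consequently $H^a_b\equiv0$ at a point exactly when $h^a_b=0$ or $\nu=0$. Moreover, in any dimension $n\ge4$, $H^a_b$ is trace-free, is a relative tensor of weight $2$, and is diagonalizable simultaneously with $g_{ab}$ and $h^a_b$, with eigenvalues $H_a=h_a^2+\frac{\nu}{2\mu}h_a-\mu$ where $h_a$ are the eigenvalues of $h^a_b$.
   Context: Setup: $(M,c)$ smooth $n$-manifold with conformal structure of signature $(n-1,1)$, tangent conformal space modeled by hyperquadric $Q^n_1\subset P^{n+1}$ with moving frames, $dA_0=\omega^0_0A_0+\omega^iA_i$, $dA_i=\omega^0_iA_0+\omega^j_iA_j+\omega^{n+1}_iA_{n+1}$. For a lightlike hypersurface $V$ (tangent at each $x$ to the isotropic cone $C_x$): adapted frames $A_0=x$, $A_1$ on the isotropic generator touched by $T_xV$, $A_n$ isotropic outside $T_xV$, $A_a$ ($a=2,\dots,n-1$), $(A_1,A_n)=-1$, $(A_a,A_b)=g_{ab}$ positive definite; $V$: $\omega^n=0$, $\omega^n_a=\lambda_{ab}\omega^b$ ($\lambda_{ab}$ symmetric), $\lambda^a_b=g^{ac}\lambda_{cb}$, $\lambda=\frac1{n-2}\lambda^a_a$; Burali-Forti affinor $h^a_b=\lambda^a_b-\lambda\delta^a_b$ (trace-free, self-adjoint w.r.t. $g$);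 umbilical point: $h^a_b=0$. Specializing $A_1$ to the harmonic pole $A_1-\lambda A_0$ gives $\lambda=0$ and $\omega^0_1=\mu\omega^1+\mu_a\omega^a$ with $\mu=\frac1{n-2}h^a_bh^b_a$; then $d\mu+2\mu(\omega^0_0-\omega^1_1)=\nu\omega^1+\nu_a\omega^a$ defines $\nu$. Define $H^a_b=h^a_ch^c_b+\frac{\nu}{2\mu}h^a_b-\mu\delta^a_b$. "Relative tensor of weight 2" means $\nabla_\delta H^a_b=2H^a_b(\pi^1_1-\pi^0_0)$ under changes of the adapted frame at a fixed point. *)

theory Defs
  imports "HOL-Analysis.Analysis"
begin

text \<open>Pointwise (algebraic) model at a point x of the lightlike hypersurface V of
  an n-manifold.  The index a ranges over the finite type 'm with CARD('m) = n - 2.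
  A matrix M stands for the mixed tensor M^a_b with M $ a $ b = M^a_b; the metric
  g $ a $ b = g_ab = (A_a, A_b); lam $ a $ b = lambda_ab (second fundamental form,
  omega^n_a = lambda_ab omega^b).\<close>

definition pos_def_sym :: "real^'m^'m \<Rightarrow> bool" where
  "pos_def_sym g \<longleftrightarrow> transpose g = g \<and> (\<forall>x. x \<noteq> 0 \<longrightarrow> x \<bullet> (g *v x) > 0)"

definition raise_idx :: "real^'m^'m \<Rightarrow> real^'m^'m \<Rightarrow> real^'m^'m" where
  "raise_idx g lam = matrix_inv g ** lam"

definition mean_curv :: "real^'m^'m \<Rightarrow> real^'m^'m \<Rightarrow> real" where
  "mean_curv g lam = trace (raise_idx g lam) / real CARD('m)"

definition burali_forti :: "real^'m^'m \<Rightarrow> real^'m^'m \<Rightarrow> real^'m^'m" where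
  "burali_forti g lam = raise_idx g lam - mean_curv g lam *\<^sub>R mat 1"

definition mu_of :: "real^'m^'m \<Rightarrow> real" where
  "mu_of h = trace (h ** h) / real CARD('m)"

definition H_aff :: "real^'m^'m \<Rightarrow> real \<Rightarrow> real^'m^'m" where
  "H_aff h \<nu> = h ** h + (\<nu> / (2 * mu_of h)) *\<^sub>R h - mu_of h *\<^sub>R mat 1"

definition diag_mat :: "('m \<Rightarrow> real) \<Rightarrow> real^'m^'m" where
  "diag_mat e = (\<chi> i j. if i = j then e i else 0)"

text \<open>Change of adapted frame at a fixed point: A_a is replaced by A_b P^b_a and the
  pair (A_0, A_1) is rescaled so that the factor exp of (pi^1_1 - pi^0_0) equals s.\<close>
definition frame_change :: "real \<Rightarrow> nat \<Rightarrow> real^'m^'m \<Rightarrow> real^'m^'m \<Rightarrow> real^'m^'m" where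
  "frame_change s w P T = (s ^ w) *\<^sub>R (matrix_inv P ** T ** P)"

end

theory Submission
  imports Defs
begin

(* The Burali-Forti affinor h is self-adjoint with respect to the positive definite metric g,
   because \<lambda>_ab is symmetric, so it has a g-orthonormal eigenbasis; an eigenvector is found by
   maximising the Rayleigh quotient on the g-orthogonal complement of those already found.
   H = h^2 + (\<nu>/2\<mu>) h - \<mu> is a polynomial in h, so the same basis diagonalises it, with
   eigenvalues h_a^2 + (\<nu>/2\<mu>) h_a - \<mu>.  It is trace-free because tr h = 0 and
   tr h^2 = (n-2) \<mu>.  Under a change of frame h, \<mu> and \<nu> acquire the factors s, s^2, s^3,
   so every term of H acquires s^2.  For n = 4, h is a trace-free 2 x 2 matrix, hence
   h^2 = \<mu> id by Cayley-Hamilton and H = (\<nu>/2\<mu>) h; finally \<mu> > 0 off umbilical points,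
   since (n-2) \<mu> is the sum of the squared eigenvalues of h. *)

section \<open>Similarity and frame changes\<close>

lemma matrix_inv_right:
  fixes A :: "'a::semiring_1^'n^'m"
  assumes "invertible A" shows "A ** matrix_inv A = mat 1"
  using someI_ex[OF assms[unfolded invertible_def]] unfolding matrix_inv_def by auto

lemma matrix_inv_left:
  fixes A :: "'a::semiring_1^'n^'m"
  assumes "invertible A" shows "matrix_inv A ** A = mat 1"
  using someI_ex[OF assms[unfolded invertible_def]] unfolding matrix_inv_def by auto

lemma matrix_add_rdistrib: "((A::'a::semiring_1^'n^'m) + B) ** C = A ** C + B ** C"
  by (simp add: matrix_matrix_mult_def vec_eq_iff sum.distrib algebra_simps)

lemma matrix_diff_rdistrib: "((A::'a::ring_1^'n^'m) - B) ** C = A ** C - B ** C"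
  by (simp add: matrix_matrix_mult_def vec_eq_iff sum_subtractf algebra_simps)

lemma matrix_diff_ldistrib: "(C::'a::ring_1^'n^'m) ** (A - B) = C ** A - C ** B"
  by (simp add: matrix_matrix_mult_def vec_eq_iff sum_subtractf algebra_simps)

lemma trace_scaleR: "trace (c *\<^sub>R (A::real^'n^'n)) = c * trace A"
  by (simp add: trace_def sum_distrib_left)

lemma trace_similar:
  fixes P A :: "real^'n^'n"
  assumes "invertible P" shows "trace (matrix_inv P ** A ** P) = trace A"
  by (metis assms matrix_mul_assoc matrix_mul_lid matrix_inv_right trace_mul_sym)

lemma similar_mult:
  fixes P A B :: "real^'n^'n"
  assumes "invertible P"
  shows "matrix_inv P ** (A ** B) ** P = (matrix_inv P ** A ** P) ** (matrix_inv P ** B ** P)"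
proof -
  have "(matrix_inv P ** A ** P) ** (matrix_inv P ** B ** P)
      = matrix_inv P ** A ** (P ** matrix_inv P) ** B ** P"
    by (simp add: matrix_mul_assoc)
  then show ?thesis
    using matrix_inv_right[OF assms] by (simp add: matrix_mul_assoc)
qed

lemma similar_quadratic:
  fixes P A :: "real^'n^'n"
  assumes P: "invertible P"
  defines "B \<equiv> matrix_inv P ** A ** P"
  shows "matrix_inv P ** (A ** A + c *\<^sub>R A - m *\<^sub>R mat 1) ** P = B ** B + c *\<^sub>R B - m *\<^sub>R mat 1"
  using matrix_inv_left[OF P]
  by (simp add: B_def similar_mult[OF P, symmetric] matrix_add_ldistrib matrix_add_rdistrib
      matrix_diff_ldistrib matrix_diff_rdistrib matrix_scalar_ac scalar_matrix_assoc[symmetric])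

lemma diag_mat_mult:
  fixes e f :: "'n::finite \<Rightarrow> real"
  shows "diag_mat e ** diag_mat f = diag_mat (\<lambda>a. e a * f a)"
proof -
  have "(\<Sum>k\<in>UNIV. (if i = k then e i else 0) * (if k = j then f k else 0))
      = (\<Sum>k\<in>UNIV. if k = i then (if i = j then e i * f i else 0) else 0)" for i j
    by (rule sum.cong) auto
  then show ?thesis
    by (simp add: diag_mat_def matrix_matrix_mult_def vec_eq_iff)
qed

lemma trace_diag_mat: "trace (diag_mat e) = sum e UNIV"
  by (simp add: trace_def diag_mat_def)

lemma similar_inverse:
  fixes P A :: "real^'n^'n"
  assumes "invertible P" shows "P ** (matrix_inv P ** A ** P) ** matrix_inv P = A"
proof -
  have "P ** (matrix_inv P ** A ** P) ** matrix_inv P = (P ** matrix_inv P) ** A ** (P ** matrix_inv P)"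
    by (simp add: matrix_mul_assoc)
  then show ?thesis
    by (simp add: matrix_inv_right[OF assms])
qed

lemma similar_eq_0_iff:
  fixes P A :: "real^'n^'n"
  assumes "invertible P" shows "matrix_inv P ** A ** P = 0 \<longleftrightarrow> A = 0"
  by (metis similar_inverse[OF assms] times0_left times0_right)

lemma frame_change_mult:
  fixes P A B :: "real^'n^'n"
  assumes "invertible P"
  shows "frame_change s v P A ** frame_change s w P B = frame_change s (v + w) P (A ** B)"
  unfolding frame_change_def similar_mult[OF assms]
  by (simp add: matrix_scalar_ac scalar_matrix_assoc[symmetric] power_add)

lemma trace_frame_change:
  fixes P A :: "real^'n^'n"
  assumes "invertible P"
  shows "trace (frame_change s w P A) = s ^ w * trace A"
  unfolding frame_change_def trace_scaleR trace_similar[OF assms] ..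

lemma mu_of_frame_change:
  fixes P h :: "real^'n^'n"
  assumes "invertible P"
  shows "mu_of (frame_change s 1 P h) = s\<^sup>2 * mu_of h"
  unfolding mu_of_def frame_change_mult[OF assms] trace_frame_change[OF assms]
  by (simp add: power2_eq_square)

(* For \<mu> = 0 both sides lose their h-term, as division by zero yields zero. *)
lemma H_aff_frame_change:
  fixes P h :: "real^'n^'n"
  assumes "s \<noteq> 0" and P: "invertible P"
  shows "H_aff (frame_change s 1 P h) (s ^ 3 * \<nu>) = frame_change s 2 P (H_aff h \<nu>)"
proof -
  let ?h' = "matrix_inv P ** h ** P"
  have coeff: "s ^ 3 * \<nu> / (2 * (s\<^sup>2 * mu_of h)) * s = s\<^sup>2 * (\<nu> / (2 * mu_of h))"
    using \<open>s \<noteq> 0\<close> by (cases "mu_of h = 0") (simp_all add: field_simps power2_eq_square power3_eq_cube)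
  have "H_aff (frame_change s 1 P h) (s ^ 3 * \<nu>)
      = s\<^sup>2 *\<^sub>R (?h' ** ?h') + (s ^ 3 * \<nu> / (2 * (s\<^sup>2 * mu_of h)) * s) *\<^sub>R ?h'
        - (s\<^sup>2 * mu_of h) *\<^sub>R mat 1"
    unfolding H_aff_def mu_of_frame_change[OF P] frame_change_mult[OF P]
    by (simp add: frame_change_def similar_mult[OF P] power2_eq_square)
  also have "\<dots> = frame_change s 2 P (H_aff h \<nu>)"
    unfolding coeff frame_change_def H_aff_def similar_quadratic[OF P] by (simp add: algebra_simps)
  finally show ?thesis .
qed

section \<open>Self-adjoint operators of a positive definite form\<close>

definition self_adjoint_wrt :: "real^'n^'n \<Rightarrow> real^'n^'n \<Rightarrow> bool" where
  "self_adjoint_wrt g A \<longleftrightarrow> transpose A ** g = g ** A"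

definition rayleigh_quotient :: "real^'n^'n \<Rightarrow> real^'n^'n \<Rightarrow> real^'n \<Rightarrow> real" where
  "rayleigh_quotient g A x = x \<bullet> (g *v (A *v x)) / (x \<bullet> (g *v x))"

lemma pos_def_sym_form_pos: "pos_def_sym g \<Longrightarrow> x \<noteq> 0 \<Longrightarrow> 0 < x \<bullet> (g *v x)"
  by (simp add: pos_def_sym_def)

lemma pos_def_sym_form_nonneg: "pos_def_sym g \<Longrightarrow> 0 \<le> x \<bullet> (g *v x)"
  by (cases "x = 0") (auto dest: pos_def_sym_form_pos)

lemma pos_def_sym_commute:
  assumes "pos_def_sym g" shows "x \<bullet> (g *v y) = y \<bullet> (g *v x)"
proof -
  have "x \<bullet> (g *v y) = (x v* g) \<bullet> y"
    by (simp add: dot_lmul_matrix)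
  also have "x v* g = transpose g *v x"
    by simp
  finally show ?thesis
    using assms unfolding pos_def_sym_def by (simp only: inner_commute)
qed

lemma pos_def_sym_invertible: "pos_def_sym g \<Longrightarrow> invertible g"
  unfolding invertible_left_inverse matrix_left_invertible_ker
  by (metis inner_zero_right less_irrefl pos_def_sym_form_pos)

lemma self_adjoint_wrt_inner:
  assumes "self_adjoint_wrt g A" shows "(A *v x) \<bullet> (g *v y) = x \<bullet> (g *v (A *v y))"
proof -
  have "(A *v x) \<bullet> (g *v y) = x \<bullet> ((transpose A ** g) *v y)"
    by (metis dot_lmul_matrix matrix_vector_mul_assoc transpose_matrix_vector transpose_transpose)
  then show ?thesis
    using assms by (simp add: self_adjoint_wrt_def matrix_vector_mul_assoc)
qed

lemma self_adjoint_burali_forti: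
  assumes g: "pos_def_sym g" and lam: "transpose lam = lam"
  shows "self_adjoint_wrt g (burali_forti g lam)"
proof -
  have gh: "g ** burali_forti g lam = lam - mean_curv g lam *\<^sub>R g"
    unfolding burali_forti_def raise_idx_def matrix_diff_ldistrib matrix_scalar_ac matrix_mul_assoc
      matrix_inv_right[OF pos_def_sym_invertible[OF g]] by simp
  have "transpose (burali_forti g lam) ** g = transpose (g ** burali_forti g lam)"
    using g by (simp add: matrix_transpose_mul pos_def_sym_def)
  also have "\<dots> = g ** burali_forti g lam"
    unfolding gh using lam g by (simp add: pos_def_sym_def transpose_def vec_eq_iff)
  finally show ?thesis
    unfolding self_adjoint_wrt_def .
qed

lemma nonpos_quadratic_linear_coeff_eq_0:
  fixes b c :: real
  assumes "\<And>t. 2 * t * b + t\<^sup>2 * c \<le> 0" shows "b = 0"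
proof (rule ccontr)
  assume "b \<noteq> 0"
  define t where "t = b / (\<bar>c\<bar> + 1)"
  have b: "b = t * (\<bar>c\<bar> + 1)" and "t \<noteq> 0"
    using \<open>b \<noteq> 0\<close> by (simp_all add: t_def add_nonneg_eq_0_iff)
  have "2 * t * b + t\<^sup>2 * c = t\<^sup>2 * (\<bar>c\<bar> + 2) + t\<^sup>2 * (c + \<bar>c\<bar>)"
    unfolding b by (simp add: power2_eq_square algebra_simps)
  moreover have "0 \<le> t\<^sup>2 * (c + \<bar>c\<bar>)"
    using abs_ge_minus_self[of c] by (intro mult_nonneg_nonneg) simp_all
  moreover have "0 < t\<^sup>2 * (\<bar>c\<bar> + 2)"
    using \<open>t \<noteq> 0\<close> by simp
  ultimately show False
    using assms[of t] by linarith
qed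

lemma rayleigh_quotient_scaleR:
  "c \<noteq> 0 \<Longrightarrow> rayleigh_quotient g A (c *\<^sub>R x) = rayleigh_quotient g A x"
  by (simp add: rayleigh_quotient_def matrix_vector_mult_scaleR)

lemma rayleigh_quotient_attains_max:
  assumes g: "pos_def_sym g" and S: "subspace S" and "z \<in> S" "z \<noteq> 0"
  obtains x where "x \<in> S" "x \<noteq> 0"
    "\<And>y. y \<in> S \<Longrightarrow> y \<noteq> 0 \<Longrightarrow> rayleigh_quotient g A y \<le> rayleigh_quotient g A x"
proof -
  define K where "K = sphere 0 1 \<inter> S"
  have "compact K"
    unfolding K_def using closed_subspace[OF S] by (intro compact_Int_closed) auto
  moreover have "z /\<^sub>R norm z \<in> K"
    using \<open>z \<in> S\<close> \<open>z \<noteq> 0\<close> S unfolding K_def by (simp add: subspace_scale)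
  moreover have "continuous_on K (rayleigh_quotient g A)"
  proof -
    have "x \<bullet> (g *v x) \<noteq> 0" if "x \<in> K" for x
    proof -
      have "x \<noteq> 0"
        using that unfolding K_def by auto
      then show ?thesis
        using pos_def_sym_form_pos[OF g] by force
    qed
    then show ?thesis
      unfolding rayleigh_quotient_def matrix_vector_mul_assoc
      by (intro continuous_intros matrix_vector_mult_linear_continuous_on) auto
  qed
  ultimately obtain x where x: "x \<in> K" and max: "\<And>y. y \<in> K \<Longrightarrow> rayleigh_quotient g A y \<le> rayleigh_quotient g A x"
    using continuous_attains_sup[of K "rayleigh_quotient g A"] by blast
  show thesis
  proof
    show "x \<in> S" "x \<noteq> 0"
      using x unfolding K_def by auto
    fix y assume "y \<in> S" "y \<noteq> 0"
    then have "y /\<^sub>R norm y \<in> K"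
      using S unfolding K_def by (simp add: subspace_scale)
    then show "rayleigh_quotient g A y \<le> rayleigh_quotient g A x"
      using max rayleigh_quotient_scaleR[of "inverse (norm y)" g A y] \<open>y \<noteq> 0\<close> by force
  qed
qed

(* The quotient at x + t y is at most its value at x for every t; clearing denominators gives
   a quadratic inequality in t whose linear coefficient is 2 y . g (A x). *)
lemma rayleigh_max_orthogonal:
  assumes g: "pos_def_sym g" and A: "self_adjoint_wrt g A" and S: "subspace S"
    and x: "x \<in> S" "x \<noteq> 0"
    and max: "\<And>z. z \<in> S \<Longrightarrow> z \<noteq> 0 \<Longrightarrow> rayleigh_quotient g A z \<le> rayleigh_quotient g A x"
    and y: "y \<in> S" and orth: "x \<bullet> (g *v y) = 0"
  shows "y \<bullet> (g *v (A *v x)) = 0"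
proof -
  define M where "M = rayleigh_quotient g A x"
  define q where "q = x \<bullet> (g *v x)"
  define b where "b = y \<bullet> (g *v (A *v x))"
  define c where "c = y \<bullet> (g *v (A *v y))"
  define d where "d = y \<bullet> (g *v y)"
  have "q > 0"
    unfolding q_def using pos_def_sym_form_pos[OF g x(2)] .
  then have xAx: "x \<bullet> (g *v (A *v x)) = M * q"
    unfolding M_def q_def rayleigh_quotient_def by simp
  have yx: "y \<bullet> (g *v x) = 0"
    using orth pos_def_sym_commute[OF g] by metis
  have xAy: "x \<bullet> (g *v (A *v y)) = b"
    unfolding b_def using self_adjoint_wrt_inner[OF A] pos_def_sym_commute[OF g] by metis
  have "2 * t * b + t\<^sup>2 * (c - M * d) \<le> 0" for t
  proof -
    define w where "w = x + t *\<^sub>R y"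
    have "w \<in> S"
      unfolding w_def using S x y by (simp add: subspace_add subspace_scale)
    have wgw: "w \<bullet> (g *v w) = q + t\<^sup>2 * d"
      unfolding w_def d_def q_def using orth yx
      by (simp add: algebra_simps matrix_vector_mult_scaleR inner_add_left inner_add_right power2_eq_square)
    have wgAw: "w \<bullet> (g *v (A *v w)) = M * q + 2 * t * b + t\<^sup>2 * c"
      unfolding w_def c_def using xAx xAy b_def
      by (simp add: algebra_simps matrix_vector_mult_scaleR inner_add_left inner_add_right power2_eq_square)
    have "0 \<le> d"
      unfolding d_def using pos_def_sym_form_nonneg[OF g] .
    then have "0 < w \<bullet> (g *v w)"
      unfolding wgw using \<open>q > 0\<close> by (simp add: add_pos_nonneg)
    moreover from this have "rayleigh_quotient g A w \<le> M"
      unfolding M_def using max[OF \<open>w \<in> S\<close>] by fastforce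
    ultimately have "w \<bullet> (g *v (A *v w)) \<le> M * (w \<bullet> (g *v w))"
      unfolding rayleigh_quotient_def by (simp add: divide_le_eq)
    then show ?thesis
      unfolding wgAw wgw by (simp add: algebra_simps)
  qed
  then show ?thesis
    using nonpos_quadratic_linear_coeff_eq_0 b_def by blast
qed

lemma rayleigh_max_eigenvector:
  assumes g: "pos_def_sym g" and A: "self_adjoint_wrt g A" and S: "subspace S"
    and inv: "\<And>z. z \<in> S \<Longrightarrow> A *v z \<in> S"
    and x: "x \<in> S" "x \<noteq> 0"
    and max: "\<And>z. z \<in> S \<Longrightarrow> z \<noteq> 0 \<Longrightarrow> rayleigh_quotient g A z \<le> rayleigh_quotient g A x"
  shows "A *v x = rayleigh_quotient g A x *\<^sub>R x"
proof -
  define M where "M = rayleigh_quotient g A x"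
  define w where "w = A *v x - M *\<^sub>R x"
  have "w \<in> S"
    unfolding w_def using inv x S by (simp add: subspace_diff subspace_scale)
  have "x \<bullet> (g *v x) \<noteq> 0"
    using pos_def_sym_form_pos[OF g x(2)] by simp
  then have "x \<bullet> (g *v w) = 0"
    unfolding w_def M_def rayleigh_quotient_def by (simp add: algebra_simps matrix_vector_mult_scaleR)
  then have "w \<bullet> (g *v (A *v x)) = 0" and "w \<bullet> (g *v x) = 0"
    using rayleigh_max_orthogonal[OF g A S x max \<open>w \<in> S\<close>] pos_def_sym_commute[OF g] by metis+
  then have "w \<bullet> (g *v w) = 0"
    unfolding w_def by (simp add: algebra_simps matrix_vector_mult_scaleR inner_diff_right)
  then have "w = 0"
    using pos_def_sym_form_pos[OF g] by fastforce
  then show ?thesis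
    unfolding w_def M_def by simp
qed

lemma self_adjoint_invariant_subspace_eigenvector:
  assumes g: "pos_def_sym g" and A: "self_adjoint_wrt g A" and S: "subspace S"
    and inv: "\<And>z. z \<in> S \<Longrightarrow> A *v z \<in> S" and "z \<in> S" "z \<noteq> 0"
  obtains x c where "x \<in> S" "x \<noteq> 0" "A *v x = c *\<^sub>R x"
proof -
  obtain x where "x \<in> S" "x \<noteq> 0"
    and "\<And>y. y \<in> S \<Longrightarrow> y \<noteq> 0 \<Longrightarrow> rayleigh_quotient g A y \<le> rayleigh_quotient g A x"
    using rayleigh_quotient_attains_max[OF g S \<open>z \<in> S\<close> \<open>z \<noteq> 0\<close>] by blast
  then show thesis
    using that rayleigh_max_eigenvector[OF g A S inv] by blast
qed

lemma form_orthogonal_nonzero_exists: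
  fixes g :: "real^'n^'n" and v :: "'a \<Rightarrow> real^'n"
  assumes "finite I" and "card I < CARD('n)"
  shows "\<exists>z. z \<noteq> 0 \<and> (\<forall>i\<in>I. v i \<bullet> (g *v z) = 0)"
proof -
  let ?U = "(\<lambda>i. v i v* g) ` I"
  have "dim ?U \<le> card I"
    using dim_le_card'[of ?U] card_image_le[OF \<open>finite I\<close>, of "\<lambda>i. v i v* g"] \<open>finite I\<close> by simp
  then have "dim ?U < DIM(real^'n)"
    using assms(2) by simp
  then obtain z where "z \<noteq> 0" and orth: "\<And>u. u \<in> span ?U \<Longrightarrow> orthogonal z u"
    using orthogonal_to_subspace_exists by blast
  have "v i \<bullet> (g *v z) = 0" if "i \<in> I" for i
  proof -
    have "orthogonal z (v i v* g)"
      using that by (intro orth span_base) simp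
    then show ?thesis
      by (simp add: dot_lmul_matrix[symmetric] orthogonal_def inner_commute)
  qed
  with \<open>z \<noteq> 0\<close> show ?thesis
    by blast
qed

lemma self_adjoint_orthonormal_eigenvectors:
  fixes g A :: "real^'n^'n" and I :: "'n set"
  assumes g: "pos_def_sym g" and A: "self_adjoint_wrt g A"
  shows "\<exists>w e. (\<forall>i\<in>I. \<forall>j\<in>I. w i \<bullet> (g *v w j) = (if i = j then 1 else 0))
              \<and> (\<forall>i\<in>I. A *v w i = e i *\<^sub>R w i)"
proof -
  have "finite I"
    by simp
  then show ?thesis
  proof (induction I rule: finite_induct)
    case empty
    then show ?case by simp
  next
    case (insert a I)
    then obtain w e where orthonormal: "\<forall>i\<in>I. \<forall>j\<in>I. w i \<bullet> (g *v w j) = (if i = j then 1 else 0)"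
      and eigen: "\<forall>i\<in>I. A *v w i = e i *\<^sub>R w i"
      by blast
    define S where "S = {z. \<forall>i\<in>I. w i \<bullet> (g *v z) = 0}"
    have S: "subspace S"
      unfolding S_def subspace_def
      by (simp add: matrix_vector_right_distrib matrix_vector_mult_scaleR inner_add_right)
    have inv: "A *v z \<in> S" if "z \<in> S" for z
    proof -
      have "w i \<bullet> (g *v (A *v z)) = e i * (w i \<bullet> (g *v z))" if "i \<in> I" for i
        using self_adjoint_wrt_inner[OF A, of "w i" z] eigen that by simp
      then show ?thesis
        using \<open>z \<in> S\<close> unfolding S_def by simp
    qed
    have "card I < CARD('n)"
      using insert.hyps(2) by (intro psubset_card_mono) auto
    then have "\<exists>z. z \<noteq> 0 \<and> z \<in> S"
      using form_orthogonal_nonzero_exists[OF \<open>finite I\<close>, where g = g and v = w]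
      unfolding S_def by simp
    then obtain z where "z \<noteq> 0" and "z \<in> S"
      by blast
    obtain y c where "y \<in> S" "y \<noteq> 0" and yc: "A *v y = c *\<^sub>R y"
      by (rule self_adjoint_invariant_subspace_eigenvector[OF g A S inv \<open>z \<in> S\<close> \<open>z \<noteq> 0\<close>])
    define u where "u = (1 / sqrt (y \<bullet> (g *v y))) *\<^sub>R y"
    have "0 < y \<bullet> (g *v y)"
      using pos_def_sym_form_pos[OF g \<open>y \<noteq> 0\<close>] .
    then have unit: "u \<bullet> (g *v u) = 1"
      unfolding u_def by (simp add: matrix_vector_mult_scaleR power2_eq_square[symmetric])
    have "A *v u = c *\<^sub>R u"
      unfolding u_def by (simp add: matrix_vector_mult_scaleR yc)
    have orth: "w i \<bullet> (g *v u) = 0" "u \<bullet> (g *v w i) = 0" if "i \<in> I" for i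
      using \<open>y \<in> S\<close> that pos_def_sym_commute[OF g, of u "w i"]
      unfolding S_def u_def by (simp_all add: matrix_vector_mult_scaleR)
    let ?w = "w(a := u)" and ?e = "e(a := c)"
    have "?w i \<bullet> (g *v ?w j) = (if i = j then 1 else 0)" if "i \<in> insert a I" "j \<in> insert a I" for i j
      using that orthonormal unit orth insert.hyps(2) by (cases "i = a"; cases "j = a") auto
    moreover have "A *v ?w i = ?e i *\<^sub>R ?w i" if "i \<in> insert a I" for i
      using that eigen \<open>A *v u = c *\<^sub>R u\<close> by (cases "i = a") auto
    ultimately show ?case
      by (intro exI[of _ ?w] exI[of _ ?e]) simp
  qed
qed

lemma self_adjoint_diagonalizable:
  fixes g A :: "real^'n^'n"
  assumes g: "pos_def_sym g" and A: "self_adjoint_wrt g A"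
  obtains P :: "real^'n^'n" and e where "invertible P" "transpose P ** g ** P = mat 1"
    "matrix_inv P ** A ** P = diag_mat e"
proof -
  obtain w :: "'n \<Rightarrow> real^'n" and e where orthonormal: "\<forall>i j. w i \<bullet> (g *v w j) = (if i = j then 1 else 0)"
    and eigen: "\<forall>i. A *v w i = e i *\<^sub>R w i"
    using self_adjoint_orthonormal_eigenvectors[OF g A, of UNIV] by blast
  define P :: "real^'n^'n" where "P = (\<chi> i j. w j $ i)"
  have PgP: "transpose P ** g ** P = mat 1"
  proof -
    have "(transpose P ** (g ** P)) $ i $ j = w i \<bullet> (g *v w j)" for i j
      by (simp add: P_def matrix_matrix_mult_def transpose_def matrix_vector_mult_def inner_vec_def)
    then show ?thesis
      using orthonormal by (simp add: vec_eq_iff mat_def matrix_mul_assoc[symmetric])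
  qed
  then have P: "invertible P"
    unfolding invertible_left_inverse by (metis matrix_mul_assoc)
  have "A ** P = P ** diag_mat e"
  proof -
    have "(A ** P) $ i $ j = (A *v w j) $ i" for i j
      by (simp add: P_def matrix_matrix_mult_def matrix_vector_mult_def)
    moreover have "(P ** diag_mat e) $ i $ j = e j * w j $ i" for i j
      by (simp add: P_def matrix_matrix_mult_def diag_mat_def if_distrib cong: if_cong)
    ultimately show ?thesis
      using eigen by (simp add: vec_eq_iff)
  qed
  then have "matrix_inv P ** A ** P = (matrix_inv P ** P) ** diag_mat e"
    by (simp add: matrix_mul_assoc[symmetric])
  then have "matrix_inv P ** A ** P = diag_mat e"
    by (simp add: matrix_inv_left[OF P])
  with P PgP show thesis
    using that by blast
qed

section \<open>The affinor H\<close>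

lemma trace_burali_forti: "trace (burali_forti g lam) = 0"
  by (simp add: burali_forti_def mean_curv_def trace_sub trace_scaleR trace_I)

lemma trace_H_aff:
  fixes h :: "real^'n^'n"
  assumes "trace h = 0" shows "trace (H_aff h \<nu>) = 0"
  using assms by (simp add: H_aff_def mu_of_def trace_sub trace_add trace_scaleR trace_I)

(* Cayley-Hamilton: A^2 = - det A id when tr A = 0, and then tr (A^2) = - 2 det A. *)
lemma traceless_2x2_square:
  fixes A :: "real^'n^'n"
  assumes "CARD('n) = 2" and "trace A = 0"
  shows "A ** A = mu_of A *\<^sub>R mat 1"
proof -
  obtain a b :: 'n where ab: "a \<noteq> b" "UNIV = {a, b}"
    using assms(1) by (metis card_2_iff)
  have sum2: "sum f UNIV = f a + f b" for f :: "'n \<Rightarrow> real"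
    unfolding ab(2) using ab(1) by simp
  have bb: "A $ b $ b = - A $ a $ a"
    using assms(2) by (simp add: trace_def sum2)
  have mu: "mu_of A = A $ a $ a * A $ a $ a + A $ a $ b * A $ b $ a"
    by (simp add: mu_of_def trace_def matrix_matrix_mult_def sum2 bb assms(1) algebra_simps)
  have idx: "i = a \<or> i = b" for i
    using ab(2) by blast
  have "(A ** A) $ i $ j = (mu_of A *\<^sub>R mat 1) $ i $ j" for i j
    using idx[of i] idx[of j] ab(1)
    by (auto simp: matrix_matrix_mult_def mat_def sum2 bb mu algebra_simps)
  then show ?thesis
    by (simp add: vec_eq_iff)
qed

lemma H_aff_traceless_2x2:
  fixes h :: "real^'n^'n"
  assumes "CARD('n) = 2" and "trace h = 0"
  shows "H_aff h \<nu> = (\<nu> / (2 * mu_of h)) *\<^sub>R h"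
  by (simp add: H_aff_def traceless_2x2_square[OF assms])

lemma similar_H_aff_diag:
  fixes P h :: "real^'n^'n"
  assumes P: "invertible P" and "matrix_inv P ** h ** P = diag_mat e"
  shows "matrix_inv P ** H_aff h \<nu> ** P
           = diag_mat (\<lambda>a. (e a)\<^sup>2 + (\<nu> / (2 * mu_of h)) * e a - mu_of h)"
  unfolding H_aff_def similar_quadratic[OF P] assms(2) diag_mat_mult
  by (simp add: diag_mat_def mat_def vec_eq_iff power2_eq_square)

lemma mu_of_pos:
  fixes g h :: "real^'n^'n"
  assumes g: "pos_def_sym g" and h: "self_adjoint_wrt g h" and "h \<noteq> 0"
  shows "0 < mu_of h"
proof -
  obtain P :: "real^'n^'n" and e where P: "invertible P" and D: "matrix_inv P ** h ** P = diag_mat e"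
    using self_adjoint_diagonalizable[OF g h] by blast
  have "trace (h ** h) = trace (diag_mat e ** diag_mat e)"
    using trace_similar[OF P, of "h ** h"] similar_mult[OF P, of h h] D by simp
  also have "\<dots> = (\<Sum>a\<in>UNIV. (e a)\<^sup>2)"
    by (simp add: diag_mat_mult trace_diag_mat power2_eq_square)
  finally have tr: "trace (h ** h) = (\<Sum>a\<in>UNIV. (e a)\<^sup>2)" .
  obtain a where "e a \<noteq> 0"
  proof (rule ccontr)
    assume "\<not> thesis"
    with that have "diag_mat e = 0"
      by (auto simp: diag_mat_def vec_eq_iff)
    then show False
      using D \<open>h \<noteq> 0\<close> similar_eq_0_iff[OF P, of h] by simp
  qed
  then have "0 < trace (h ** h)"
    unfolding tr by (intro sum_pos2[of UNIV a]) auto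
  then show ?thesis
    by (simp add: mu_of_def)
qed

theorem mainTheorem14:
  fixes g lam :: "real^'m^'m" and \<nu> :: real
  assumes g_pd: "pos_def_sym g"
    and lam_sym: "transpose lam = lam"
    and no_umbilic: "burali_forti g lam \<noteq> 0"
  defines "h \<equiv> burali_forti g lam"
    and "\<mu> \<equiv> mu_of (burali_forti g lam)"
    and "H \<equiv> H_aff (burali_forti g lam) \<nu>"
  shows
    "(CARD('m) = 2 \<longrightarrow> H = (\<nu> / (2 * \<mu>)) *\<^sub>R h \<and> (H = 0 \<longleftrightarrow> h = 0 \<or> \<nu> = 0))
     \<and> (CARD('m) \<ge> 2 \<longrightarrow>
          trace H = 0
        \<and> (\<forall>s P. s \<noteq> 0 \<and> invertible P \<longrightarrow>
              H_aff (frame_change s 1 P h) (s ^ 3 * \<nu>) = frame_change s 2 P H)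
        \<and> (\<exists>(P::real^'m^'m) e. invertible P \<and> transpose P ** g ** P = mat 1
              \<and> matrix_inv P ** h ** P = diag_mat e
              \<and> matrix_inv P ** H ** P
                  = diag_mat (\<lambda>a. (e a)\<^sup>2 + (\<nu> / (2 * \<mu>)) * e a - \<mu>)))"
proof -
  have H: "H = H_aff h \<nu>" and \<mu>: "\<mu> = mu_of h"
    by (simp_all add: H_def \<mu>_def h_def)
  have self_adjoint: "self_adjoint_wrt g h" and traceless: "trace h = 0"
    unfolding h_def using self_adjoint_burali_forti[OF g_pd lam_sym] trace_burali_forti by blast+
  have "0 < \<mu>"
    unfolding \<mu> using mu_of_pos[OF g_pd self_adjoint no_umbilic[folded h_def]] .
  have "CARD('m) = 2 \<Longrightarrow> H = (\<nu> / (2 * \<mu>)) *\<^sub>R h"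
    unfolding H \<mu> using H_aff_traceless_2x2 traceless by blast
  with \<open>0 < \<mu>\<close> have dim_4: "CARD('m) = 2 \<longrightarrow> H = (\<nu> / (2 * \<mu>)) *\<^sub>R h \<and> (H = 0 \<longleftrightarrow> h = 0 \<or> \<nu> = 0)"
    by auto
  obtain P :: "real^'m^'m" and e where "invertible P" "transpose P ** g ** P = mat 1"
    and diag: "matrix_inv P ** h ** P = diag_mat e"
    using self_adjoint_diagonalizable[OF g_pd self_adjoint] by blast
  moreover have "matrix_inv P ** H ** P = diag_mat (\<lambda>a. (e a)\<^sup>2 + (\<nu> / (2 * \<mu>)) * e a - \<mu>)"
    unfolding H \<mu> using similar_H_aff_diag[OF \<open>invertible P\<close> diag] .
  ultimately show ?thesis
    using dim_4 trace_H_aff[OF traceless] H_aff_frame_change unfolding H by blast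
qed

end
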